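(* Let $\mathcal X$ be a finite multi-set of real symmetric $2\times2$ matrices with $\lambda_1$ the unique largest eigenvalue of $\mathcal X$ (with eigenvector $u_1$, belonging to $X_1$, and $v_1\perp u_1$ a unit vector). Suppose the second largest eigenvalue $\lambda_2$ of $\mathcal X$ is unique and its associated eigenvector $u_2$ is not perpendicular to $u_1$. Then there exists $\varepsilon>0$ such that $$S':=\lambda_1u_1u_1^{\mathsf T}+(\lambda_2-\varepsilon)v_1v_1^{\mathsf T}\in\mathcal U(\mathcal X).$$
   Context: $\mathrm{Sym}(2)$ is the set of real symmetric $2\times2$ matrices; $A\le_{\mathrm L}B$ (Loewner order) means $B-A$ is positive semidefinite. $\mathcal U(\mathcal X):=\{Y\in\mathrm{Sym}(2):X\le_{\mathrm L}Y\ \forall X\in\mathcal X\}$. Each $X\in\mathcal X$ has spectral form $X=\lambda uu^{\mathsf T}+\mu vv^{\mathsf T}$, $\lambda\ge\mu$, $u\perp v$ unit vectors; "the eigenvalues of $\mathcal X$" means the multi-set of all these $\lambda,\mu$ (two per matrix) with their associated eigenvectors; an eigenvalue is unique if it occurs exactly once in this multi-set. *)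

theory Defs
  imports "HOL-Analysis.Analysis" "HOL-Library.Multiset"
begin

type_synonym mat2 = "real^2^2"

definition sym2 :: "mat2 \<Rightarrow> bool" where
  "sym2 A \<longleftrightarrow> transpose A = A"

definition outer :: "real^2 \<Rightarrow> real^2 \<Rightarrow> mat2" where
  "outer u v = (\<chi> i j. u $ i * v $ j)"

definition psd2 :: "mat2 \<Rightarrow> bool" where
  "psd2 A \<longleftrightarrow> sym2 A \<and> (\<forall>x. 0 \<le> x \<bullet> (A *v x))"

definition loewner_le :: "mat2 \<Rightarrow> mat2 \<Rightarrow> bool" where
  "loewner_le A B \<longleftrightarrow> psd2 (B - A)"

definition upper_bounds :: "mat2 multiset \<Rightarrow> mat2 set" where
  "upper_bounds XX = {Y. sym2 Y \<and> (\<forall>X\<in>#XX. loewner_le X Y)}"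

definition spectral_form :: "mat2 \<Rightarrow> real \<Rightarrow> real \<Rightarrow> real^2 \<Rightarrow> real^2 \<Rightarrow> bool" where
  "spectral_form X l m u v \<longleftrightarrow> m \<le> l \<and> norm u = 1 \<and> norm v = 1 \<and> u \<bullet> v = 0 \<and>
     X = l *\<^sub>R outer u u + m *\<^sub>R outer v v"

definition eig_hi :: "mat2 \<Rightarrow> real" where
  "eig_hi X = (THE l. \<exists>m u v. spectral_form X l m u v)"

definition eig_lo :: "mat2 \<Rightarrow> real" where
  "eig_lo X = (THE m. \<exists>l u v. spectral_form X l m u v)"

definition eigs :: "mat2 multiset \<Rightarrow> real multiset" where
  "eigs XX = \<Sum>\<^sub># (image_mset (\<lambda>X. {#eig_hi X, eig_lo X#}) XX)"

end

theory Submission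
  imports Defs
begin

text \<open>
  Put \<open>S = l1 u1 u1\<^sup>T + (l2 - \<epsilon>) v1 v1\<^sup>T\<close>. Every matrix of \<open>XX\<close> other than \<open>X1\<close> and \<open>X2\<close> has
  all its eigenvalues strictly below \<open>l2\<close>, so for small \<open>\<epsilon>\<close> it lies below \<open>(l2 - \<epsilon>) I \<le> S\<close>;
  \<open>X1\<close> lies below \<open>S\<close> because it has the same eigenbasis and smaller eigenvalues.
  The uniqueness hypotheses force \<open>X2 = l2 p p\<^sup>T + b q q\<^sup>T\<close> with \<open>b < l2\<close> and \<open>u2 = p\<close>.
  In the coordinates \<open>t = p \<bullet> x\<close>, \<open>s = q \<bullet> x\<close> the form of \<open>S - X2\<close> is
  \<open>(l1 - l2 + \<epsilon>) (u1 \<bullet> x)\<^sup>2 - \<epsilon> t\<^sup>2 + (l2 - b - \<epsilon>) s\<^sup>2\<close> with \<open>u1 \<bullet> x = (u1 \<bullet> p) t + (u1 \<bullet> q) s\<close>,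
  and since \<open>u1 \<bullet> p \<noteq> 0\<close> the first term compensates the negative one for \<open>\<epsilon>\<close> small enough.
\<close>

lemma orthonormal2_expansion:
  fixes u v x :: "real^2"
  assumes "norm u = 1" "norm v = 1" "u \<bullet> v = 0"
  shows "x = (u \<bullet> x) *\<^sub>R u + (v \<bullet> x) *\<^sub>R v"
proof -
  have uv: "u \<noteq> v" using assms by (auto simp: norm_eq_1)
  have orth: "pairwise orthogonal {u, v}"
    using assms by (auto simp: pairwise_insert orthogonal_def inner_commute)
  have "0 \<notin> {u, v}" using assms by auto
  with orth have "independent {u, v}" by (rule pairwise_orthogonal_independent)
  moreover have "dim (UNIV :: (real^2) set) \<le> card {u, v}" using uv by simp
  ultimately have "x \<in> span {u, v}" using card_ge_dim_independent[of "{u, v}" UNIV] by blast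
  then have "(\<Sum>i\<in>{u, v}. (x \<bullet> i) *\<^sub>R i) = x"
    using assms orth by (intro orthonormal_basis_expand) auto
  then show ?thesis using uv by (simp add: inner_commute)
qed

lemma orthonormal2_parseval:
  fixes u v x :: "real^2"
  assumes "norm u = 1" "norm v = 1" "u \<bullet> v = 0"
  shows "(u \<bullet> x)\<^sup>2 + (v \<bullet> x)\<^sup>2 = x \<bullet> x"
proof -
  have "x \<bullet> x = x \<bullet> ((u \<bullet> x) *\<^sub>R u + (v \<bullet> x) *\<^sub>R v)"
    using orthonormal2_expansion[OF assms] by simp
  then show ?thesis by (simp add: inner_add_right inner_commute power2_eq_square)
qed

lemma outer_mult_vec: "outer u w *v x = (w \<bullet> x) *\<^sub>R u"
  by (simp add: outer_def vec_eq_iff matrix_vector_mult_def inner_vec_def sum_distrib_left mult_ac)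

lemma spectral_form_orthonormal:
  "spectral_form X l m u v \<Longrightarrow> norm u = 1 \<and> norm v = 1 \<and> u \<bullet> v = 0"
  by (simp add: spectral_form_def)

lemma spectral_form_sym2: "spectral_form X l m u v \<Longrightarrow> sym2 X"
  by (simp add: spectral_form_def sym2_def transpose_def outer_def vec_eq_iff mult.commute)

lemma spectral_form_mult_vec:
  "spectral_form X l m u v \<Longrightarrow> X *v x = (l * (u \<bullet> x)) *\<^sub>R u + (m * (v \<bullet> x)) *\<^sub>R v"
  by (simp add: spectral_form_def matrix_vector_mult_add_rdistrib outer_mult_vec
      scaleR_matrix_vector_assoc[symmetric])

lemma spectral_form_eigvecs:
  assumes "spectral_form X l m u v"
  shows "X *v u = l *\<^sub>R u" "X *v v = m *\<^sub>R v"
  using spectral_form_mult_vec[OF assms] spectral_form_orthonormal[OF assms]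
  by (simp_all add: norm_eq_1 inner_commute)

lemma spectral_form_quadratic:
  "spectral_form X l m u v \<Longrightarrow> x \<bullet> (X *v x) = l * (u \<bullet> x)\<^sup>2 + m * (v \<bullet> x)\<^sup>2"
  by (simp add: spectral_form_mult_vec inner_add_right inner_commute power2_eq_square)

lemma spectral_form_quadratic_bounds:
  assumes "spectral_form X l m u v"
  shows "m * (x \<bullet> x) \<le> x \<bullet> (X *v x)" "x \<bullet> (X *v x) \<le> l * (x \<bullet> x)"
proof -
  have ml: "m \<le> l" using assms by (simp add: spectral_form_def)
  have parseval: "x \<bullet> x = (u \<bullet> x)\<^sup>2 + (v \<bullet> x)\<^sup>2"
    using spectral_form_orthonormal[OF assms] orthonormal2_parseval by metis
  show "m * (x \<bullet> x) \<le> x \<bullet> (X *v x)" "x \<bullet> (X *v x) \<le> l * (x \<bullet> x)"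
    unfolding spectral_form_quadratic[OF assms] parseval distrib_left
    using ml by (simp_all add: mult_right_mono)
qed

lemma spectral_form_top_le:
  assumes "spectral_form X l m u v" "spectral_form X l' m' u' v'"
  shows "l \<le> l'" "m' \<le> m"
proof -
  have "norm u = 1" "norm v = 1" using assms(1) by (simp_all add: spectral_form_def)
  then have "u \<bullet> (X *v u) = l" "v \<bullet> (X *v v) = m"
    using spectral_form_eigvecs[OF assms(1)] by (simp_all add: norm_eq_1)
  with \<open>norm u = 1\<close> \<open>norm v = 1\<close> show "l \<le> l'" "m' \<le> m"
    using spectral_form_quadratic_bounds[OF assms(2)] by (metis norm_eq_1 mult_1_right)+
qed

lemma spectral_form_unique:
  "spectral_form X l m u v \<Longrightarrow> spectral_form X l' m' u' v' \<Longrightarrow> l' = l \<and> m' = m"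
  by (meson order_antisym spectral_form_top_le)

lemma eig_hi_eq: "spectral_form X l m u v \<Longrightarrow> eig_hi X = l"
  unfolding eig_hi_def by (rule the_equality) (auto dest: spectral_form_unique)

lemma eig_lo_eq: "spectral_form X l m u v \<Longrightarrow> eig_lo X = m"
  unfolding eig_lo_def by (rule the_equality) (auto dest: spectral_form_unique)

lemma spectral_form_of_eigvecs:
  fixes X :: mat2
  assumes "u \<noteq> 0" "v \<noteq> 0" "u \<bullet> v = 0" "X *v u = l *\<^sub>R u" "X *v v = m *\<^sub>R v" "m \<le> l"
  shows "spectral_form X l m (u /\<^sub>R norm u) (v /\<^sub>R norm v)" (is "spectral_form X l m ?u ?v")
proof -
  have orthonormal: "norm ?u = 1" "norm ?v = 1" "?u \<bullet> ?v = 0"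
    using assms(1-3) by simp_all
  have "X *v x = (l *\<^sub>R outer ?u ?u + m *\<^sub>R outer ?v ?v) *v x" for x
  proof -
    have "X *v x = X *v ((?u \<bullet> x) *\<^sub>R ?u + (?v \<bullet> x) *\<^sub>R ?v)"
      using orthonormal2_expansion[OF orthonormal, of x] by (rule arg_cong)
    then show ?thesis
      by (simp add: assms(4,5) mult_ac matrix_vector_right_distrib matrix_vector_mult_scaleR outer_mult_vec
          matrix_vector_mult_add_rdistrib scaleR_matrix_vector_assoc[symmetric])
  qed
  then show ?thesis
    using orthonormal assms(6) by (simp add: spectral_form_def matrix_eq)
qed

lemma matrix_vector_mult_2: "(A *v x) $ 1 = A$1$1 * x$1 + A$1$2 * x$2" "(A *v x) $ 2 = A$2$1 * x$1 + A$2$2 * x$2"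
  for A :: mat2 and x :: "real^2"
  by (simp_all add: matrix_vector_mult_def sum_2)

lemma sym2_spectral_form_exists:
  assumes "sym2 X"
  shows "\<exists>l m u v. spectral_form X l m u v"
proof -
  define a b d where "a = X$1$1" and "b = X$1$2" and "d = X$2$2"
  have "transpose X $ 2 $ 1 = X $ 2 $ 1" using assms by (simp add: sym2_def)
  then have b': "X$2$1 = b" by (simp add: transpose_def b_def)
  \<comment> \<open>\<open>(b, s)\<close> and \<open>(-s, b)\<close> are eigenvectors for \<open>a + s\<close> and \<open>d - s\<close> because \<open>s\<^sup>2 + (a - d) s = b\<^sup>2\<close>;
      both vanish only if \<open>X\<close> is already diagonal with \<open>d \<le> a\<close>.\<close>
  define D where "D = sqrt ((d - a)\<^sup>2 + 4 * b\<^sup>2)"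
  define s where "s = (d - a + D) / 2"
  have "0 \<le> D" by (simp add: D_def)
  then have "d - s \<le> a + s" by (simp add: s_def field_simps)
  have "D\<^sup>2 = (d - a)\<^sup>2 + 4 * b\<^sup>2" unfolding D_def by simp
  then have s_eq: "b * b = s * s + (a - d) * s" by (simp add: s_def power2_eq_square field_simps)
  show ?thesis
  proof (cases "b = 0 \<and> s = 0")
    case True
    then have "d \<le> a" using \<open>d - s \<le> a + s\<close> by simp
    have "X *v axis 1 1 = a *\<^sub>R axis 1 1" "X *v axis 2 1 = d *\<^sub>R axis 2 1"
      using True b' by (simp_all add: vec_eq_iff forall_2 matrix_vector_mult_2 axis_def a_def b_def d_def)
    moreover have "(axis 1 1 :: real^2) \<noteq> 0" "(axis 2 1 :: real^2) \<noteq> 0"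
      "axis 1 1 \<bullet> (axis 2 1 :: real^2) = 0"
      by (simp_all add: axis_eq_0_iff inner_axis_axis)
    ultimately show ?thesis using \<open>d \<le> a\<close> spectral_form_of_eigvecs by blast
  next
    case False
    have "X *v vector [b, s] = (a + s) *\<^sub>R vector [b, s]"
      "X *v vector [- s, b] = (d - s) *\<^sub>R vector [- s, b]"
      using s_eq b' by (auto simp: vec_eq_iff forall_2 matrix_vector_mult_2 a_def b_def d_def algebra_simps)
    moreover have "vector [b, s] \<noteq> (0::real^2)" "vector [- s, b] \<noteq> (0::real^2)"
      using False by (auto simp: vec_eq_iff forall_2)
    moreover have "vector [b, s] \<bullet> (vector [- s, b] :: real^2) = 0"
      by (simp add: inner_vec_def sum_2)
    ultimately show ?thesis using \<open>d - s \<le> a + s\<close> spectral_form_of_eigvecs by blast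
  qed
qed

lemma loewner_le_iff_quadratic:
  assumes "sym2 A" "sym2 B"
  shows "loewner_le A B \<longleftrightarrow> (\<forall>x. x \<bullet> (A *v x) \<le> x \<bullet> (B *v x))"
proof -
  have "transpose (B - A) = transpose B - transpose A"
    by (simp add: transpose_def vec_eq_iff)
  then have "sym2 (B - A)" using assms by (simp add: sym2_def)
  then show ?thesis
    by (simp add: loewner_le_def psd2_def matrix_vector_mult_diff_rdistrib inner_diff_right)
qed

lemma loewner_le_if_eig_hi_le:
  assumes X: "spectral_form X h h' p q" and S: "spectral_form S l m u v" and "h \<le> m"
  shows "loewner_le X S"
proof -
  have "x \<bullet> (X *v x) \<le> x \<bullet> (S *v x)" for x
  proof -
    have "x \<bullet> (X *v x) \<le> h * (x \<bullet> x)" by (rule spectral_form_quadratic_bounds(2)[OF X])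
    also have "\<dots> \<le> m * (x \<bullet> x)" using \<open>h \<le> m\<close> by (simp add: mult_right_mono)
    also have "\<dots> \<le> x \<bullet> (S *v x)" by (rule spectral_form_quadratic_bounds(1)[OF S])
    finally show ?thesis .
  qed
  then show ?thesis
    using X S by (simp add: loewner_le_iff_quadratic spectral_form_sym2)
qed

lemma loewner_le_spectral_mono:
  assumes X: "spectral_form X l m u v" and S: "spectral_form S l' m' u v" and "l \<le> l'" "m \<le> m'"
  shows "loewner_le X S"
proof -
  have "x \<bullet> (X *v x) \<le> x \<bullet> (S *v x)" for x
    unfolding spectral_form_quadratic[OF X] spectral_form_quadratic[OF S]
    using assms(3,4) by (intro add_mono mult_right_mono) auto
  then show ?thesis
    using X S by (simp add: loewner_le_iff_quadratic spectral_form_sym2)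
qed

lemma quadratic_form2_nonneg:
  fixes A B C t s :: real
  assumes "0 < C" "B\<^sup>2 \<le> A * C"
  shows "0 \<le> A * t\<^sup>2 + 2 * B * t * s + C * s\<^sup>2"
proof -
  have "C * (A * t\<^sup>2 + 2 * B * t * s + C * s\<^sup>2) = (C * s + B * t)\<^sup>2 + (A * C - B\<^sup>2) * t\<^sup>2"
    by (simp add: power2_eq_square algebra_simps)
  also have "\<dots> \<ge> 0" using assms(2) by simp
  finally show ?thesis using assms(1) by (simp add: zero_le_mult_iff)
qed

lemma perturbed_gap_form_nonneg:
  fixes d g e \<alpha> \<beta> t s :: real
  assumes "0 < d" "0 < g" "\<alpha>\<^sup>2 + \<beta>\<^sup>2 = 1" "0 < e" and small: "e * (d + g) \<le> d * \<alpha>\<^sup>2 * g"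
  shows "0 \<le> (d + e) * (\<alpha> * t + \<beta> * s)\<^sup>2 - e * t\<^sup>2 + (g - e) * s\<^sup>2"
proof -
  have "\<alpha>\<^sup>2 \<le> 1" using assms(3) zero_le_power2[of \<beta>] by linarith
  then have "d * \<alpha>\<^sup>2 * g \<le> d * 1 * g" using assms(1,2) by (intro mult_right_mono mult_left_mono) auto
  also have "\<dots> < g * (d + g)" using assms(1,2) by (simp add: algebra_simps)
  finally have "e * (d + g) < g * (d + g)" using small by linarith
  then have "e < g" using assms(1,2) by (simp add: mult_less_cancel_right)
  moreover have "0 \<le> d * \<beta>\<^sup>2" using assms(1) by simp
  ultimately have C: "0 < d * \<beta>\<^sup>2 + g - e" by linarith
  have "(d * \<alpha> * \<beta>)\<^sup>2 + (d * \<alpha>\<^sup>2 * g - e * (d + g) + e\<^sup>2) = (d * \<alpha>\<^sup>2 - e) * (d * \<beta>\<^sup>2 + g - e)"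
    using assms(3) by algebra
  moreover have "0 \<le> d * \<alpha>\<^sup>2 * g - e * (d + g) + e\<^sup>2" using small by simp
  ultimately have "(d * \<alpha> * \<beta>)\<^sup>2 \<le> (d * \<alpha>\<^sup>2 - e) * (d * \<beta>\<^sup>2 + g - e)" by linarith
  then have "0 \<le> (d * \<alpha>\<^sup>2 - e) * t\<^sup>2 + 2 * (d * \<alpha> * \<beta>) * t * s + (d * \<beta>\<^sup>2 + g - e) * s\<^sup>2"
    using C by (intro quadratic_form2_nonneg)
  moreover have "(d + e) * (\<alpha> * t + \<beta> * s)\<^sup>2 - e * t\<^sup>2 + (g - e) * s\<^sup>2
      = e * (\<alpha> * t + \<beta> * s)\<^sup>2 + ((d * \<alpha>\<^sup>2 - e) * t\<^sup>2 + 2 * (d * \<alpha> * \<beta>) * t * s + (d * \<beta>\<^sup>2 + g - e) * s\<^sup>2)"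
    by (simp add: power2_eq_square algebra_simps)
  ultimately show ?thesis using assms(4) by simp
qed

lemma loewner_le_perturbed_top:
  assumes X: "spectral_form X l2 b p q" and S: "spectral_form S l1 (l2 - e) u v"
    and "b < l2" "l2 < l1" "0 < e" and small: "e * (l1 - b) \<le> (l1 - l2) * (u \<bullet> p)\<^sup>2 * (l2 - b)"
  shows "loewner_le X S"
proof -
  have pq: "norm p = 1" "norm q = 1" "p \<bullet> q = 0" and uv: "norm u = 1" "norm v = 1" "u \<bullet> v = 0"
    using X S by (simp_all add: spectral_form_def)
  have coeffs: "(u \<bullet> p)\<^sup>2 + (u \<bullet> q)\<^sup>2 = 1"
    using orthonormal2_parseval[OF pq, of u] uv by (simp add: norm_eq_1 inner_commute)
  have "x \<bullet> (X *v x) \<le> x \<bullet> (S *v x)" for x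
  proof -
    have u_x: "u \<bullet> x = (u \<bullet> p) * (p \<bullet> x) + (u \<bullet> q) * (q \<bullet> x)"
      using arg_cong[OF orthonormal2_expansion[OF pq, of u], of "\<lambda>y. y \<bullet> x"]
      by (simp add: inner_add_right inner_commute)
    have v_x: "(v \<bullet> x)\<^sup>2 = (p \<bullet> x)\<^sup>2 + (q \<bullet> x)\<^sup>2 - (u \<bullet> x)\<^sup>2"
      using orthonormal2_parseval[OF pq, of x] orthonormal2_parseval[OF uv, of x] by simp
    have "x \<bullet> (S *v x) - x \<bullet> (X *v x)
        = (l1 - l2 + e) * (u \<bullet> x)\<^sup>2 - e * (p \<bullet> x)\<^sup>2 + (l2 - b - e) * (q \<bullet> x)\<^sup>2"
      unfolding spectral_form_quadratic[OF X] spectral_form_quadratic[OF S] v_x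
      by (simp add: algebra_simps)
    also have "\<dots> \<ge> 0"
      unfolding u_x using perturbed_gap_form_nonneg[OF _ _ coeffs \<open>0 < e\<close>] assms(3,4) small by simp
    finally show ?thesis by simp
  qed
  then show ?thesis
    using X S by (simp add: loewner_le_iff_quadratic spectral_form_sym2)
qed

lemma spectral_forms_top_perp_bottom:
  assumes "spectral_form X l m u v" "spectral_form X l' m' p q" "m \<noteq> l"
  shows "u \<bullet> q = 0"
proof -
  have "l' = l" "m' = m" using spectral_form_unique[OF assms(1,2)] by auto
  have "norm u = 1" "u \<bullet> v = 0" using assms(1) by (simp_all add: spectral_form_def)
  then have "u \<bullet> (X *v q) = l * (u \<bullet> q)"
    by (simp add: spectral_form_mult_vec[OF assms(1)] inner_add_right norm_eq_1)
  moreover have "u \<bullet> (X *v q) = m * (u \<bullet> q)"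
    using spectral_form_eigvecs(2)[OF assms(2)] \<open>m' = m\<close> by simp
  ultimately have "l * (u \<bullet> q) = m * (u \<bullet> q)" by linarith
  then show ?thesis using assms(3) by simp
qed

lemma eigs_add_mset: "eigs (add_mset X M) = add_mset (eig_hi X) (add_mset (eig_lo X) (eigs M))"
  by (simp add: eigs_def)

lemma eig_hi_in_eigs: "X \<in># M \<Longrightarrow> eig_hi X \<in># eigs M"
  by (metis eigs_add_mset mset_add union_single_eq_member)

lemma loewner_le_if_eigs_le:
  assumes "\<forall>X\<in>#M. sym2 X" and S: "spectral_form S l m u v" and "\<forall>e\<in>#eigs M. e \<le> m"
  shows "\<forall>X\<in>#M. loewner_le X S"
proof
  fix X assume "X \<in># M"
  then obtain h h' w w' where X: "spectral_form X h h' w w'"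
    using assms(1) sym2_spectral_form_exists by blast
  have "h \<le> m" using eig_hi_in_eigs[OF \<open>X \<in># M\<close>] eig_hi_eq[OF X] assms(3) by simp
  with loewner_le_if_eig_hi_le[OF X S] show "loewner_le X S" .
qed

lemma mset_less_margin:
  fixes c :: real
  assumes "\<forall>e\<in>#E. e < c"
  obtains \<delta> where "0 < \<delta>" "\<forall>e\<in>#E. e \<le> c - \<delta>"
proof
  let ?top = "Max (insert (c - 1) (set_mset E))"
  show "0 < c - ?top" using assms by simp
  show "\<forall>e\<in>#E. e \<le> c - (c - ?top)" by simp
qed

lemma second_eigenvalue_matrix_distinct:
  assumes X1: "spectral_form X1 l1 m1 u1 v1" and "m1 \<noteq> l1"
    and X2: "spectral_form X2 a b p q" and "l2 < l1"
    and u2: "(a = l2 \<and> u2 = p) \<or> (b = l2 \<and> u2 = q)" and "u2 \<bullet> u1 \<noteq> 0"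
  shows "X2 \<noteq> X1"
proof
  assume "X2 = X1"
  then have "a = l1" using spectral_form_unique[OF X1] X2 by blast
  with u2 \<open>l2 < l1\<close> have "u2 = q" by auto
  moreover have "u1 \<bullet> q = 0"
    using spectral_forms_top_perp_bottom[OF X1 X2[unfolded \<open>X2 = X1\<close>] \<open>m1 \<noteq> l1\<close>] .
  ultimately show False using \<open>u2 \<bullet> u1 \<noteq> 0\<close> by (simp add: inner_commute)
qed

lemma top_two_eigenvalues_split:
  assumes X1_in: "X1 \<in># XX" and X1: "spectral_form X1 l1 m1 u1 v1"
    and l1_unique: "count (eigs XX) l1 = 1" and "l2 < l1"
    and l2_second: "\<forall>e\<in>#eigs XX. e \<noteq> l1 \<longrightarrow> e \<le> l2" and l2_unique: "count (eigs XX) l2 = 1"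
    and X2_in: "X2 \<in># XX" and X2: "spectral_form X2 a b p q"
    and u2: "(a = l2 \<and> u2 = p) \<or> (b = l2 \<and> u2 = q)" and "u2 \<bullet> u1 \<noteq> 0"
  obtains M where "XX = add_mset X1 (add_mset X2 M)" "a = l2" "u2 = p" "b < l2" "m1 < l2"
    "\<forall>e\<in>#eigs M. e < l2"
proof -
  obtain M' where M': "XX = add_mset X1 M'" using X1_in by (metis mset_add)
  have "count (add_mset l1 (add_mset m1 (eigs M'))) l1 = 1"
    using l1_unique by (simp add: M' eigs_add_mset eig_hi_eq[OF X1] eig_lo_eq[OF X1])
  then have "m1 \<noteq> l1" by (auto split: if_splits)
  then have "X2 \<noteq> X1"
    using second_eigenvalue_matrix_distinct[OF X1 _ X2 \<open>l2 < l1\<close> u2 \<open>u2 \<bullet> u1 \<noteq> 0\<close>] by blast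
  then obtain M where M: "M' = add_mset X2 M" using X2_in M' by (metis insert_noteq_member mset_add)
  have E: "eigs XX = add_mset l1 (add_mset m1 (add_mset a (add_mset b (eigs M))))"
    by (simp add: M' M eigs_add_mset eig_hi_eq[OF X1] eig_lo_eq[OF X1] eig_hi_eq[OF X2] eig_lo_eq[OF X2])
  have "b \<le> a" using X2 by (simp add: spectral_form_def)
  have not_l1: "a \<noteq> l1" "b \<noteq> l1" "\<forall>e\<in>#eigs M. e \<noteq> l1"
    using l1_unique unfolding E by (auto split: if_splits simp: count_eq_zero_iff)
  then have "a \<le> l2" using l2_second unfolding E by simp
  with u2 \<open>b \<le> a\<close> have "a = l2" by auto
  have not_l2: "b \<noteq> l2" "m1 \<noteq> l2" "\<forall>e\<in>#eigs M. e \<noteq> l2"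
    using l2_unique \<open>a = l2\<close> \<open>l2 < l1\<close> unfolding E by (auto split: if_splits simp: count_eq_zero_iff)
  show thesis
  proof
    show "XX = add_mset X1 (add_mset X2 M)" "a = l2" by (simp_all add: M' M \<open>a = l2\<close>)
    show "u2 = p" "b < l2" using u2 not_l2 \<open>b \<le> a\<close> \<open>a = l2\<close> by auto
    show "m1 < l2" "\<forall>e\<in>#eigs M. e < l2"
      using l2_second not_l1 not_l2 \<open>m1 \<noteq> l1\<close> unfolding E by force+
  qed
qed

theorem lemma7:
  fixes XX :: "mat2 multiset"
    and X1 X2 :: mat2
    and l1 m1 l2 a b :: real
    and u1 v1 u2 p q :: "real^2"
  assumes sym: "\<forall>X\<in>#XX. sym2 X"
    and X1_in: "X1 \<in># XX"
    and X1_spec: "spectral_form X1 l1 m1 u1 v1"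
    and l1_largest: "\<forall>e\<in>#eigs XX. e \<le> l1"
    and l1_unique: "count (eigs XX) l1 = 1"
    and l2_in: "l2 \<in># eigs XX"
    and l2_less: "l2 < l1"
    and l2_second: "\<forall>e\<in>#eigs XX. e \<noteq> l1 \<longrightarrow> e \<le> l2"
    and l2_unique: "count (eigs XX) l2 = 1"
    and X2_in: "X2 \<in># XX"
    and X2_spec: "spectral_form X2 a b p q"
    and u2_eigvec: "(a = l2 \<and> u2 = p) \<or> (b = l2 \<and> u2 = q)"
    and not_perp: "u2 \<bullet> u1 \<noteq> 0"
  shows "\<exists>\<epsilon>>0. l1 *\<^sub>R outer u1 u1 + (l2 - \<epsilon>) *\<^sub>R outer v1 v1 \<in> upper_bounds XX"
proof -
  obtain M where XX: "XX = add_mset X1 (add_mset X2 M)" and "a = l2" "u2 = p" "b < l2" "m1 < l2"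
    and M_below: "\<forall>e\<in>#eigs M. e < l2"
    by (rule top_two_eigenvalues_split[OF X1_in X1_spec l1_unique l2_less l2_second l2_unique
          X2_in X2_spec u2_eigvec not_perp])
  obtain \<delta> where "0 < \<delta>" and \<delta>: "\<forall>e\<in>#add_mset m1 (eigs M). e \<le> l2 - \<delta>"
    using mset_less_margin[of "add_mset m1 (eigs M)" l2] \<open>m1 < l2\<close> M_below by auto
  define \<epsilon> where "\<epsilon> = min \<delta> ((l1 - l2) * (u1 \<bullet> p)\<^sup>2 * (l2 - b) / (l1 - b))"
  have "u1 \<bullet> p \<noteq> 0" using not_perp \<open>u2 = p\<close> by (simp add: inner_commute)
  then have "0 < \<epsilon>" using \<open>0 < \<delta>\<close> \<open>b < l2\<close> l2_less by (simp add: \<epsilon>_def)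
  have "\<epsilon> \<le> \<delta>" "\<epsilon> \<le> (l1 - l2) * (u1 \<bullet> p)\<^sup>2 * (l2 - b) / (l1 - b)" by (simp_all add: \<epsilon>_def)
  then have below_\<epsilon>: "\<forall>e\<in>#add_mset m1 (eigs M). e \<le> l2 - \<epsilon>" using \<delta> by fastforce
  have small: "\<epsilon> * (l1 - b) \<le> (l1 - l2) * (u1 \<bullet> p)\<^sup>2 * (l2 - b)"
    using \<open>\<epsilon> \<le> _ / (l1 - b)\<close> \<open>b < l2\<close> l2_less by (simp add: pos_le_divide_eq)
  define S where "S = l1 *\<^sub>R outer u1 u1 + (l2 - \<epsilon>) *\<^sub>R outer v1 v1"
  have S: "spectral_form S l1 (l2 - \<epsilon>) u1 v1"
    using X1_spec \<open>0 < \<epsilon>\<close> l2_less by (simp add: spectral_form_def S_def)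
  have "loewner_le X1 S"
    using loewner_le_spectral_mono[OF X1_spec S] below_\<epsilon> by simp
  moreover have "loewner_le X2 S"
    using loewner_le_perturbed_top[OF X2_spec[unfolded \<open>a = l2\<close>] S] \<open>b < l2\<close> l2_less \<open>0 < \<epsilon>\<close> small .
  moreover have "\<forall>X\<in>#M. loewner_le X S"
    using sym below_\<epsilon> unfolding XX by (intro loewner_le_if_eigs_le[OF _ S]) simp_all
  ultimately have "\<forall>X\<in>#XX. loewner_le X S" unfolding XX by simp
  then show ?thesis
    using \<open>0 < \<epsilon>\<close> spectral_form_sym2[OF S] unfolding upper_bounds_def S_def by auto
qed

end
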